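(* Let $\Omega_L=(0,L)\times(0,\infty)$ with coordinates $(x,Y)$. Steady Euler flows $[u^0_e,v^0_e,P^0_e]$ on $\Omega_L$ are smooth solutions of $$u^0_e\partial_x u^0_e+v^0_e\partial_Y u^0_e+\partial_x P^0_e=0,\quad u^0_e\partial_x v^0_e+v^0_e\partial_Y v^0_e+\partial_Y P^0_e=0,\quad \partial_x u^0_e+\partial_Y v^0_e=0\ \text{ in }\Omega_L,$$ with $v^0_e|_{Y=0}=0$ and $v^0_e\to 0$ as $Y\to\infty$. Then there exists a nontrivial (non-shear) set of such Euler flows satisfying: (i) $0<c_0\le u^0_e\le C_0<\infty$ for some constants $c_0,C_0$; (ii) $\|v^0_e/Y\|_{L^\infty}\ll 1$; (iii) $\|Y^k\nabla^m v^0_e\|_{L^\infty}<\infty$ for all $k,m\ge 0$ up to any prescribed (large) order; (iv) $\|Y^k\nabla^m u^0_e\|_{L^\infty}<\infty$ for all $k\ge 0$, $m\ge 1$ up to any prescribed (large) order. Precisely: for every $\eta>0$ and every integer $K\ge 1$ there is $L_0>0$ such that for every $L\in(0,L_0]$ there exists such a flow on $\Omega_L$ with $v^0_e\not\equiv 0$ (so $u^0_e$ genuinely depends on $x$), satisfying (i), $\|v^0_e/Y\|_{L^\infty(\Omega_L)}\le\eta$, $\|Y^k\nabla^m v^0_e\|_{L^\infty}<\infty$ for $0\le k,m\le K$, and $\|Y^k\nabla^m u^0_e\|_{L^\infty}<\infty$ for $0\le k\le K$, $1\le m\le K$.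
   Context: $\nabla^m$ denotes the collection of all partial derivatives of order $m$ in $(x,Y)$. A shear flow is one of the form $(U(Y),0)$; "nontrivial" means the flows constructed are not shear flows. *)

theory Defs
  imports "HOL-Analysis.Analysis"
begin

definition pdX :: "(real \<Rightarrow> real \<Rightarrow> real) \<Rightarrow> real \<Rightarrow> real \<Rightarrow> real" where
  "pdX f = (\<lambda>x Y. deriv (\<lambda>t. f t Y) x)"

definition pdY :: "(real \<Rightarrow> real \<Rightarrow> real) \<Rightarrow> real \<Rightarrow> real \<Rightarrow> real" where
  "pdY f = (\<lambda>x Y. deriv (\<lambda>t. f x t) Y)"

text \<open>Iterated partial derivative along a word: True = d/dx, False = d/dY
  (the head of the list is applied last).\<close>
fun pder :: "bool list \<Rightarrow> (real \<Rightarrow> real \<Rightarrow> real) \<Rightarrow> real \<Rightarrow> real \<Rightarrow> real" where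
  "pder [] f = f"
| "pder (True # w) f = pdX (pder w f)"
| "pder (False # w) f = pdY (pder w f)"

definition Omega :: "real \<Rightarrow> (real \<times> real) set" where
  "Omega L = {0<..<L} \<times> {0<..}"

definition smooth2_on :: "(real \<times> real) set \<Rightarrow> (real \<Rightarrow> real \<Rightarrow> real) \<Rightarrow> bool" where
  "smooth2_on S f \<longleftrightarrow>
     (\<forall>w. continuous_on S (\<lambda>p. pder w f (fst p) (snd p)) \<and>
          (\<forall>(x,Y)\<in>S. (\<lambda>t. pder w f t Y) differentiable (at x) \<and>
                      (\<lambda>t. pder w f x t) differentiable (at Y)))"

text \<open>Finiteness of the weighted sup norm || Y^k nabla^m f ||_{L^infinity(Omega_L)}:
  every partial derivative of order m, weighted by Y^k, is bounded on Omega_L.\<close>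
definition weighted_bounded :: "real \<Rightarrow> nat \<Rightarrow> nat \<Rightarrow> (real \<Rightarrow> real \<Rightarrow> real) \<Rightarrow> bool" where
  "weighted_bounded L k m f \<longleftrightarrow>
     (\<forall>w. length w = m \<longrightarrow>
        (\<exists>B. \<forall>(x,Y)\<in>Omega L. \<bar>Y ^ k * pder w f x Y\<bar> \<le> B))"

definition steady_euler :: "real \<Rightarrow> (real \<Rightarrow> real \<Rightarrow> real) \<Rightarrow> (real \<Rightarrow> real \<Rightarrow> real)
    \<Rightarrow> (real \<Rightarrow> real \<Rightarrow> real) \<Rightarrow> bool" where
  "steady_euler L u v P \<longleftrightarrow>
     smooth2_on (Omega L) u \<and> smooth2_on (Omega L) v \<and> smooth2_on (Omega L) P \<and>
     (\<forall>(x,Y)\<in>Omega L.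
        u x Y * pdX u x Y + v x Y * pdY u x Y + pdX P x Y = 0 \<and>
        u x Y * pdX v x Y + v x Y * pdY v x Y + pdY P x Y = 0 \<and>
        pdX u x Y + pdY v x Y = 0) \<and>
     (\<forall>x\<in>{0<..<L}. ((\<lambda>Y. v x Y) \<longlongrightarrow> 0) (at_right 0)) \<and>
     (\<forall>x\<in>{0<..<L}. ((\<lambda>Y. v x Y) \<longlongrightarrow> 0) at_top)"

end

theory Submission
  imports Defs "HOL-Real_Asymp.Real_Asymp"
begin

text \<open>Take u - i v = 1 + \<epsilon> e^{z^2} with z = x + i Y. As the conjugate velocity of a holomorphic
  function, (u, v) is divergence free and irrotational, so it is a steady Euler flow with the
  Bernoulli pressure -(u^2 + v^2)/2. Here v = -\<epsilon> e^{x^2-Y^2} sin(2xY) vanishes on Y = 0,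
  |u - 1| \<le> |\<epsilon>| e^{L^2} and |v| \<le> 2|\<epsilon>| L e^{L^2} Y on \<Omega>_L, and every partial derivative of
  u and v has the form Re(q(z) e^{z^2}) with q a polynomial, hence decays like e^{-Y^2} against any
  power of Y. Choosing \<epsilon> small yields all the bounds; v \<noteq> 0 and u depends on x.\<close>

abbreviation cplx :: "real \<Rightarrow> real \<Rightarrow> complex" where
  "cplx x Y \<equiv> complex_of_real x + \<i> * complex_of_real Y"

lemma has_vector_derivative_holomorphic_x:
  assumes "(H has_field_derivative H') (at (cplx x Y))"
  shows "((\<lambda>t. H (cplx t Y)) has_vector_derivative H') (at x)"
proof -
  have "((\<lambda>t. cplx t Y) has_vector_derivative 1) (at x)"
    by (auto intro!: derivative_eq_intros)
  from field_vector_diff_chain_at[OF this assms] show ?thesis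
    by (simp add: o_def)
qed

lemma has_vector_derivative_holomorphic_Y:
  assumes "(H has_field_derivative H') (at (cplx x Y))"
  shows "((\<lambda>t. H (cplx x t)) has_vector_derivative \<i> * H') (at Y)"
proof -
  have "((\<lambda>t. cplx x t) has_vector_derivative \<i>) (at Y)"
    by (auto intro!: derivative_eq_intros)
  from field_vector_diff_chain_at[OF this assms] show ?thesis
    by (simp add: o_def)
qed

lemma pdX_eqI: "(\<And>x Y. ((\<lambda>t. f t Y) has_real_derivative g x Y) (at x)) \<Longrightarrow> pdX f = g"
  unfolding pdX_def by (intro ext DERIV_imp_deriv) auto

lemma pdY_eqI: "(\<And>x Y. ((\<lambda>t. f x t) has_real_derivative g x Y) (at Y)) \<Longrightarrow> pdY f = g"
  unfolding pdY_def by (intro ext DERIV_imp_deriv) auto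

definition bernoulli_pressure ::
    "(real \<Rightarrow> real \<Rightarrow> real) \<Rightarrow> (real \<Rightarrow> real \<Rightarrow> real) \<Rightarrow> real \<Rightarrow> real \<Rightarrow> real" where
  "bernoulli_pressure u v = (\<lambda>x Y. - ((u x Y)\<^sup>2 + (v x Y)\<^sup>2) / 2)"

lemma bernoulli_momentum:
  assumes ux: "((\<lambda>t. u t Y) has_real_derivative ux) (at x)"
    and uy: "((\<lambda>t. u x t) has_real_derivative uy) (at Y)"
    and vx: "((\<lambda>t. v t Y) has_real_derivative vx) (at x)"
    and vy: "((\<lambda>t. v x t) has_real_derivative vy) (at Y)"
    and irrotational: "uy = vx"
  shows "u x Y * pdX u x Y + v x Y * pdY u x Y + pdX (bernoulli_pressure u v) x Y = 0"
    and "u x Y * pdX v x Y + v x Y * pdY v x Y + pdY (bernoulli_pressure u v) x Y = 0"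
proof -
  have "pdX (bernoulli_pressure u v) x Y = - (u x Y * ux + v x Y * vx)"
    unfolding pdX_def bernoulli_pressure_def
    by (rule DERIV_imp_deriv) (auto intro!: derivative_eq_intros ux vx)
  moreover have "pdY (bernoulli_pressure u v) x Y = - (u x Y * uy + v x Y * vy)"
    unfolding pdY_def bernoulli_pressure_def
    by (rule DERIV_imp_deriv) (auto intro!: derivative_eq_intros uy vy)
  moreover have "pdX u x Y = ux" "pdY u x Y = uy" "pdX v x Y = vx" "pdY v x Y = vy"
    unfolding pdX_def pdY_def using ux uy vx vy by (auto intro: DERIV_imp_deriv)
  ultimately show "u x Y * pdX u x Y + v x Y * pdY u x Y + pdX (bernoulli_pressure u v) x Y = 0"
    and "u x Y * pdX v x Y + v x Y * pdY v x Y + pdY (bernoulli_pressure u v) x Y = 0"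
    using irrotational by (simp_all add: algebra_simps)
qed

definition gauss_pderiv :: "complex poly \<Rightarrow> complex poly" where
  "gauss_pderiv q = pderiv q + [:0, 2:] * q"

definition re_gauss :: "complex poly \<Rightarrow> real \<Rightarrow> real \<Rightarrow> real" where
  "re_gauss q x Y = Re (poly q (cplx x Y) * exp ((cplx x Y)\<^sup>2))"

lemma DERIV_poly_times_exp_square:
  "((\<lambda>z. poly q z * exp (z\<^sup>2)) has_field_derivative poly (gauss_pderiv q) z * exp (z\<^sup>2)) (at z)"
proof -
  have "((\<lambda>z. exp (z\<^sup>2)) has_field_derivative exp (z\<^sup>2) * (2 * z)) (at z)"
    by (auto intro!: derivative_eq_intros)
  from DERIV_mult[OF poly_DERIV this] show ?thesis
    by (simp add: gauss_pderiv_def algebra_simps)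
qed

lemma re_gauss_has_derivative_x:
  "((\<lambda>t. re_gauss q t Y) has_real_derivative re_gauss (gauss_pderiv q) x Y) (at x)"
  unfolding re_gauss_def
  using has_field_derivative_Re[OF has_vector_derivative_holomorphic_x[OF DERIV_poly_times_exp_square]] .

lemma re_gauss_has_derivative_Y:
  "((\<lambda>t. re_gauss q x t) has_real_derivative re_gauss (smult \<i> (gauss_pderiv q)) x Y) (at Y)"
  unfolding re_gauss_def
  using has_field_derivative_Re[OF has_vector_derivative_holomorphic_Y[OF DERIV_poly_times_exp_square]]
  by (simp add: mult.assoc)

lemma pdX_re_gauss: "pdX (re_gauss q) = re_gauss (gauss_pderiv q)"
  by (rule pdX_eqI) (rule re_gauss_has_derivative_x)

lemma pdY_re_gauss: "pdY (re_gauss q) = re_gauss (smult \<i> (gauss_pderiv q))"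
  by (rule pdY_eqI) (rule re_gauss_has_derivative_Y)

lemma gauss_pderiv_smult: "gauss_pderiv (smult c q) = smult c (gauss_pderiv q)"
  unfolding gauss_pderiv_def by (simp add: pderiv_smult smult_add_right mult.commute)

lemma re_gauss_uminus: "re_gauss (- q) x Y = - re_gauss q x Y"
  unfolding re_gauss_def by simp

lemma continuous_on_re_gauss: "continuous_on UNIV (\<lambda>p. re_gauss q (fst p) (snd p))"
  unfolding re_gauss_def by (intro continuous_intros continuous_on_poly)

inductive_set gauss_algebra :: "(real \<Rightarrow> real \<Rightarrow> real) set" where
  const: "(\<lambda>x Y. c) \<in> gauss_algebra"
| re_gauss: "re_gauss q \<in> gauss_algebra"
| add: "f \<in> gauss_algebra \<Longrightarrow> g \<in> gauss_algebra \<Longrightarrow> (\<lambda>x Y. f x Y + g x Y) \<in> gauss_algebra"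
| mult: "f \<in> gauss_algebra \<Longrightarrow> g \<in> gauss_algebra \<Longrightarrow> (\<lambda>x Y. f x Y * g x Y) \<in> gauss_algebra"

lemma gauss_algebra_partials:
  assumes "f \<in> gauss_algebra"
  shows "(\<forall>x Y. ((\<lambda>t. f t Y) has_real_derivative pdX f x Y) (at x) \<and>
                ((\<lambda>t. f x t) has_real_derivative pdY f x Y) (at Y)) \<and>
         pdX f \<in> gauss_algebra \<and> pdY f \<in> gauss_algebra"
  using assms
proof (induction rule: gauss_algebra.induct)
  case (const c)
  have "pdX (\<lambda>x Y. c) = (\<lambda>x Y. 0)" "pdY (\<lambda>x Y. c) = (\<lambda>x Y. 0)"
    by (auto intro: pdX_eqI pdY_eqI)
  then show ?case by (auto intro: gauss_algebra.const)
next
  case (re_gauss q)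
  show ?case
    using re_gauss_has_derivative_x re_gauss_has_derivative_Y
    by (auto simp: pdX_re_gauss pdY_re_gauss intro: gauss_algebra.re_gauss)
next
  case (add f g)
  have "pdX (\<lambda>x Y. f x Y + g x Y) = (\<lambda>x Y. pdX f x Y + pdX g x Y)"
    and "pdY (\<lambda>x Y. f x Y + g x Y) = (\<lambda>x Y. pdY f x Y + pdY g x Y)"
    using add.IH by (auto intro!: pdX_eqI pdY_eqI DERIV_add)
  then show ?case
    using add.IH by (auto intro!: DERIV_add gauss_algebra.add)
next
  case (mult f g)
  have "pdX (\<lambda>x Y. f x Y * g x Y) = (\<lambda>x Y. pdX f x Y * g x Y + pdX g x Y * f x Y)"
    and "pdY (\<lambda>x Y. f x Y * g x Y) = (\<lambda>x Y. pdY f x Y * g x Y + pdY g x Y * f x Y)"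
    using mult.IH by (auto intro!: pdX_eqI pdY_eqI DERIV_mult)
  then show ?case
    using mult by (auto intro!: DERIV_mult gauss_algebra.add gauss_algebra.mult)
qed

lemma pder_in_gauss_algebra: "f \<in> gauss_algebra \<Longrightarrow> pder w f \<in> gauss_algebra"
proof (induction w)
  case (Cons b w)
  then show ?case using gauss_algebra_partials by (cases b) auto
qed simp

lemma continuous_on_gauss_algebra:
  "f \<in> gauss_algebra \<Longrightarrow> continuous_on UNIV (\<lambda>p. f (fst p) (snd p))"
  by (induction rule: gauss_algebra.induct) (auto intro!: continuous_intros continuous_on_re_gauss)

lemma smooth2_on_gauss_algebra:
  assumes "f \<in> gauss_algebra"
  shows "smooth2_on S f"
  unfolding smooth2_on_def
proof (intro allI conjI ballI)
  fix w
  have fw: "pder w f \<in> gauss_algebra" using assms by (rule pder_in_gauss_algebra)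
  show "continuous_on S (\<lambda>p. pder w f (fst p) (snd p))"
    using continuous_on_gauss_algebra[OF fw] continuous_on_subset by blast
  fix p assume "p \<in> S"
  show "case p of (x, Y) \<Rightarrow>
          (\<lambda>t. pder w f t Y) differentiable at x \<and> (\<lambda>t. pder w f x t) differentiable at Y"
    using gauss_algebra_partials[OF fw]
    by (auto simp: split_beta intro: differentiableI has_field_derivative_imp_has_derivative)
qed

lemma norm_poly_le_power:
  fixes q :: "'a::real_normed_field poly"
  shows "norm (poly q z) \<le> (\<Sum>i\<le>degree q. norm (coeff q i)) * (1 + norm z) ^ degree q"
proof -
  have "norm (poly q z) \<le> (\<Sum>i\<le>degree q. norm (coeff q i * z ^ i))"
    unfolding poly_altdef by (rule norm_sum)
  also have "\<dots> \<le> (\<Sum>i\<le>degree q. norm (coeff q i) * (1 + norm z) ^ degree q)"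
  proof (rule sum_mono)
    fix i assume "i \<in> {..degree q}"
    have "norm z ^ i \<le> (1 + norm z) ^ i" by (rule power_mono) auto
    also have "\<dots> \<le> (1 + norm z) ^ degree q"
      using \<open>i \<in> {..degree q}\<close> by (intro power_increasing) auto
    finally have "norm z ^ i \<le> (1 + norm z) ^ degree q" .
    then show "norm (coeff q i * z ^ i) \<le> norm (coeff q i) * (1 + norm z) ^ degree q"
      by (auto simp: norm_mult norm_power intro: mult_left_mono)
  qed
  also have "\<dots> = (\<Sum>i\<le>degree q. norm (coeff q i)) * (1 + norm z) ^ degree q"
    by (simp add: sum_distrib_right)
  finally show ?thesis .
qed

lemma polynomial_times_gaussian_bounded:
  fixes a :: real
  shows "\<exists>B. \<forall>Y\<ge>0. (a + Y) ^ N * exp (- (Y\<^sup>2)) \<le> B"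
proof -
  define g where "g Y = (a + Y) ^ N * exp (- (Y\<^sup>2))" for Y
  have "(g \<longlongrightarrow> 0) at_top" unfolding g_def by real_asymp
  then have "\<forall>\<^sub>F Y in at_top. g Y < 1" by (rule order_tendstoD) simp
  then obtain Y0 where tail: "\<And>Y. Y \<ge> Y0 \<Longrightarrow> g Y < 1"
    by (auto simp: eventually_at_top_linorder)
  have "bounded (g ` {0..Y0})"
    unfolding g_def by (intro compact_imp_bounded compact_continuous_image continuous_intros) auto
  then obtain B where "\<forall>Y\<in>{0..Y0}. \<bar>g Y\<bar> \<le> B"
    by (auto simp: bounded_real)
  then have "\<forall>Y\<ge>0. g Y \<le> max 1 B"
    using tail by (metis abs_ge_self atLeastAtMost_iff le_max_iff_disj less_eq_real_def linorder_not_le)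
  then show ?thesis unfolding g_def by blast
qed

lemma exp_square_diff_le_gaussian: "(x, Y) \<in> Omega L \<Longrightarrow> exp (x\<^sup>2 - Y\<^sup>2) \<le> exp (L\<^sup>2) * exp (- (Y\<^sup>2))"
  by (auto simp: Omega_def simp flip: exp_add intro!: power_strict_mono less_imp_le)

lemma re_gauss_weighted_bounded: "\<exists>B. \<forall>(x, Y)\<in>Omega L. \<bar>Y ^ k * re_gauss q x Y\<bar> \<le> B"
proof -
  define M where "M = (\<Sum>i\<le>degree q. norm (coeff q i))"
  define N where "N = k + degree q"
  obtain B where B: "\<And>Y. Y \<ge> 0 \<Longrightarrow> (1 + L + Y) ^ N * exp (- (Y\<^sup>2)) \<le> B"
    using polynomial_times_gaussian_bounded by blast
  have "\<bar>Y ^ k * re_gauss q x Y\<bar> \<le> M * exp (L\<^sup>2) * B" if xY: "(x, Y) \<in> Omega L" for x Y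
  proof -
    have x: "0 < x" "x < L" and Y: "0 < Y" using xY by (auto simp: Omega_def)
    have "norm (cplx x Y) \<le> \<bar>x\<bar> + \<bar>Y\<bar>"
      using norm_triangle_ineq[of "complex_of_real x" "\<i> * complex_of_real Y"] by (simp add: norm_mult)
    then have "1 + norm (cplx x Y) \<le> 1 + L + Y" using x Y by linarith
    then have "norm (poly q (cplx x Y)) \<le> M * (1 + L + Y) ^ degree q"
      using norm_poly_le_power[of q "cplx x Y"] unfolding M_def
      by (meson mult_left_mono norm_ge_zero order_trans power_mono sum_nonneg add_nonneg_nonneg zero_le_one)
    moreover have "Y ^ k \<le> (1 + L + Y) ^ k" using x Y by (intro power_mono) auto
    moreover have "\<bar>re_gauss q x Y\<bar> \<le> norm (poly q (cplx x Y)) * exp (x\<^sup>2 - Y\<^sup>2)"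
      using abs_Re_le_cmod[of "poly q (cplx x Y) * exp ((cplx x Y)\<^sup>2)"]
      by (simp add: re_gauss_def norm_mult power2_eq_square)
    moreover note exp_square_diff_le_gaussian[OF xY]
    ultimately have "\<bar>Y ^ k * re_gauss q x Y\<bar>
        \<le> (1 + L + Y) ^ k * (M * (1 + L + Y) ^ degree q * (exp (L\<^sup>2) * exp (- (Y\<^sup>2))))"
      unfolding abs_mult using Y
      by (smt (verit, best) mult_mono norm_ge_zero exp_ge_zero zero_le_power)
    also have "\<dots> = M * exp (L\<^sup>2) * ((1 + L + Y) ^ N * exp (- (Y\<^sup>2)))"
      by (simp add: N_def power_add)
    also have "\<dots> \<le> M * exp (L\<^sup>2) * B"
      using B Y by (intro mult_left_mono) (auto simp: M_def sum_nonneg)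
    finally show ?thesis .
  qed
  then show ?thesis by blast
qed

lemma pder_re_gauss: "\<exists>q'. pder w (re_gauss q) = re_gauss q'"
proof (induction w)
  case (Cons b w)
  then obtain q' where "pder w (re_gauss q) = re_gauss q'" by blast
  then show ?case by (cases b) (auto simp: pdX_re_gauss pdY_re_gauss)
qed auto

lemma pder_const_plus_re_gauss:
  "w \<noteq> [] \<Longrightarrow> pder w (\<lambda>x Y. c + re_gauss q x Y) = pder w (re_gauss q)"
proof (induction w)
  case (Cons b w)
  have "pdX (\<lambda>x Y. c + re_gauss q x Y) = pdX (re_gauss q)"
    by (rule pdX_eqI) (auto simp: pdX_re_gauss intro!: derivative_eq_intros re_gauss_has_derivative_x)
  moreover have "pdY (\<lambda>x Y. c + re_gauss q x Y) = pdY (re_gauss q)"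
    by (rule pdY_eqI) (auto simp: pdY_re_gauss intro!: derivative_eq_intros re_gauss_has_derivative_Y)
  ultimately show ?case using Cons by (cases b; cases "w = []") auto
qed simp

lemma weighted_bounded_re_gauss: "weighted_bounded L k m (re_gauss q)"
  unfolding weighted_bounded_def
proof (intro allI impI)
  fix w :: "bool list"
  obtain q' where "pder w (re_gauss q) = re_gauss q'" using pder_re_gauss by blast
  then show "\<exists>B. \<forall>(x, Y)\<in>Omega L. \<bar>Y ^ k * pder w (re_gauss q) x Y\<bar> \<le> B"
    using re_gauss_weighted_bounded by simp
qed

lemma weighted_bounded_const_plus_re_gauss:
  assumes "1 \<le> m"
  shows "weighted_bounded L k m (\<lambda>x Y. c + re_gauss q x Y)"
proof -
  have "pder w (\<lambda>x Y. c + re_gauss q x Y) = pder w (re_gauss q)" if "length w = m" for w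
    using that assms by (intro pder_const_plus_re_gauss) auto
  then show ?thesis using weighted_bounded_re_gauss[of L k m q] by (simp add: weighted_bounded_def)
qed

definition gauss_flow_u :: "real \<Rightarrow> real \<Rightarrow> real \<Rightarrow> real" where
  "gauss_flow_u \<epsilon> = (\<lambda>x Y. 1 + re_gauss [:complex_of_real \<epsilon>:] x Y)"

definition gauss_flow_v :: "real \<Rightarrow> real \<Rightarrow> real \<Rightarrow> real" where
  "gauss_flow_v \<epsilon> = re_gauss (smult \<i> [:complex_of_real \<epsilon>:])"

lemma gauss_flow_u_eq: "gauss_flow_u \<epsilon> x Y = 1 + \<epsilon> * exp (x\<^sup>2 - Y\<^sup>2) * cos (2 * x * Y)"
  unfolding gauss_flow_u_def re_gauss_def by (simp add: Re_exp power2_eq_square algebra_simps)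

lemma gauss_flow_v_eq: "gauss_flow_v \<epsilon> x Y = - \<epsilon> * exp (x\<^sup>2 - Y\<^sup>2) * sin (2 * x * Y)"
  unfolding gauss_flow_v_def re_gauss_def by (simp add: Im_exp power2_eq_square algebra_simps)

lemma steady_euler_gauss_flow:
  "steady_euler L (gauss_flow_u \<epsilon>) (gauss_flow_v \<epsilon>)
     (bernoulli_pressure (gauss_flow_u \<epsilon>) (gauss_flow_v \<epsilon>))"
proof -
  define q where "q = [:complex_of_real \<epsilon>:]"
  define D where "D = gauss_pderiv q"
  have u: "gauss_flow_u \<epsilon> = (\<lambda>x Y. 1 + re_gauss q x Y)"
    and v: "gauss_flow_v \<epsilon> = re_gauss (smult \<i> q)"
    by (simp_all add: gauss_flow_u_def gauss_flow_v_def q_def)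
  have euler: "u x Y * pdX u x Y + v x Y * pdY u x Y + pdX (bernoulli_pressure u v) x Y = 0 \<and>
        u x Y * pdX v x Y + v x Y * pdY v x Y + pdY (bernoulli_pressure u v) x Y = 0 \<and>
        pdX u x Y + pdY v x Y = 0"
    if "u = gauss_flow_u \<epsilon>" "v = gauss_flow_v \<epsilon>" for u v x Y
  proof -
    have ux: "((\<lambda>t. u t Y) has_real_derivative re_gauss D x Y) (at x)"
      using that(1) unfolding u D_def by (auto intro!: derivative_eq_intros re_gauss_has_derivative_x)
    have uy: "((\<lambda>t. u x t) has_real_derivative re_gauss (smult \<i> D) x Y) (at Y)"
      using that(1) unfolding u D_def by (auto intro!: derivative_eq_intros re_gauss_has_derivative_Y)
    have vx: "((\<lambda>t. v t Y) has_real_derivative re_gauss (smult \<i> D) x Y) (at x)"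
      using that(2) re_gauss_has_derivative_x[of "smult \<i> q"] unfolding v D_def
      by (simp add: gauss_pderiv_smult)
    have vy: "((\<lambda>t. v x t) has_real_derivative - re_gauss D x Y) (at Y)"
      using that(2) re_gauss_has_derivative_Y[of "smult \<i> q"] unfolding v D_def
      by (simp add: gauss_pderiv_smult re_gauss_uminus)
    have "pdX u x Y + pdY v x Y = 0"
      using DERIV_imp_deriv[OF ux] DERIV_imp_deriv[OF vy] by (simp add: pdX_def pdY_def)
    with bernoulli_momentum[OF ux uy vx vy] show ?thesis by simp
  qed
  have "((\<lambda>Y. gauss_flow_v \<epsilon> x Y) \<longlongrightarrow> 0) (at_right 0)" for x
  proof -
    have "((\<lambda>Y. - \<epsilon> * exp (x\<^sup>2 - Y\<^sup>2) * sin (2 * x * Y)) \<longlongrightarrow> - \<epsilon> * exp (x\<^sup>2 - 0\<^sup>2) * sin (2 * x * 0))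
        (at_right 0)"
      by (intro tendsto_intros)
    then show ?thesis by (simp add: gauss_flow_v_eq)
  qed
  moreover have "((\<lambda>Y. gauss_flow_v \<epsilon> x Y) \<longlongrightarrow> 0) at_top" for x
  proof (rule Lim_null_comparison)
    show "\<forall>\<^sub>F Y in at_top. norm (gauss_flow_v \<epsilon> x Y) \<le> \<bar>\<epsilon>\<bar> * exp (x\<^sup>2 - Y\<^sup>2)"
      by (intro always_eventually allI) (simp add: gauss_flow_v_eq abs_mult mult_left_le)
    show "((\<lambda>Y. \<bar>\<epsilon>\<bar> * exp (x\<^sup>2 - Y\<^sup>2)) \<longlongrightarrow> 0) at_top"
      by real_asymp
  qed
  moreover have alg: "gauss_flow_u \<epsilon> \<in> gauss_algebra" "gauss_flow_v \<epsilon> \<in> gauss_algebra"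
    unfolding u v by (auto intro: gauss_algebra.intros)
  moreover have "bernoulli_pressure (gauss_flow_u \<epsilon>) (gauss_flow_v \<epsilon>) \<in> gauss_algebra"
  proof -
    have "bernoulli_pressure (gauss_flow_u \<epsilon>) (gauss_flow_v \<epsilon>) = (\<lambda>x Y. (- 1 / 2) *
        (gauss_flow_u \<epsilon> x Y * gauss_flow_u \<epsilon> x Y + gauss_flow_v \<epsilon> x Y * gauss_flow_v \<epsilon> x Y))"
      by (simp add: bernoulli_pressure_def power2_eq_square fun_eq_iff field_simps)
    with gauss_algebra.mult[OF gauss_algebra.const
        gauss_algebra.add[OF gauss_algebra.mult[OF alg(1) alg(1)] gauss_algebra.mult[OF alg(2) alg(2)]]]
    show ?thesis by (simp only:)
  qed
  ultimately show ?thesis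
    unfolding steady_euler_def using euler by (auto intro!: smooth2_on_gauss_algebra)
qed

lemma exp_square_diff_le_exp_square:
  assumes "(x, Y) \<in> Omega L"
  shows "exp (x\<^sup>2 - Y\<^sup>2) \<le> exp (L\<^sup>2)"
proof -
  have "x\<^sup>2 \<le> L\<^sup>2" using assms by (auto simp: Omega_def intro!: power_mono)
  then have "x\<^sup>2 - Y\<^sup>2 \<le> L\<^sup>2" using zero_le_power2[of Y] by linarith
  then show ?thesis by simp
qed

lemma gauss_flow_u_near_one:
  assumes "(x, Y) \<in> Omega L"
  shows "\<bar>gauss_flow_u \<epsilon> x Y - 1\<bar> \<le> \<bar>\<epsilon>\<bar> * exp (L\<^sup>2)"
proof -
  have "\<bar>gauss_flow_u \<epsilon> x Y - 1\<bar> = \<bar>\<epsilon>\<bar> * (exp (x\<^sup>2 - Y\<^sup>2) * \<bar>cos (2 * x * Y)\<bar>)"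
    by (simp add: gauss_flow_u_eq abs_mult)
  also have "\<dots> \<le> \<bar>\<epsilon>\<bar> * (exp (L\<^sup>2) * 1)"
    using exp_square_diff_le_exp_square[OF assms] abs_cos_le_one
    by (intro mult_left_mono mult_mono) auto
  finally show ?thesis by simp
qed

lemma gauss_flow_v_le:
  assumes "(x, Y) \<in> Omega L"
  shows "\<bar>gauss_flow_v \<epsilon> x Y\<bar> \<le> 2 * \<bar>\<epsilon>\<bar> * L * exp (L\<^sup>2) * Y"
proof -
  have x: "0 < x" "x < L" and Y: "0 < Y" using assms by (auto simp: Omega_def)
  have "\<bar>sin (2 * x * Y)\<bar> \<le> \<bar>2 * x * Y\<bar>" by (rule abs_sin_x_le_abs_x)
  also have "\<dots> \<le> 2 * L * Y" using x Y by simp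
  finally have "\<bar>sin (2 * x * Y)\<bar> \<le> 2 * L * Y" .
  then have "\<bar>gauss_flow_v \<epsilon> x Y\<bar> \<le> \<bar>\<epsilon>\<bar> * (exp (L\<^sup>2) * (2 * L * Y))"
    unfolding gauss_flow_v_eq abs_mult abs_minus_cancel abs_exp_cancel mult.assoc
    using exp_square_diff_le_exp_square[OF assms] by (intro mult_left_mono mult_mono) auto
  then show ?thesis by (simp add: algebra_simps)
qed

lemma gauss_flow_bounds_unit_width:
  assumes "L \<le> 1" "(x, Y) \<in> Omega L"
  shows "\<bar>gauss_flow_u \<epsilon> x Y - 1\<bar> \<le> 3 * \<bar>\<epsilon>\<bar>" and "\<bar>gauss_flow_v \<epsilon> x Y / Y\<bar> \<le> 6 * \<bar>\<epsilon>\<bar>"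
proof -
  have L: "0 < L" and Y: "0 < Y" using assms(2) by (auto simp: Omega_def)
  have exp_L: "exp (L\<^sup>2) \<le> 3"
    using L assms(1) exp_le by (meson exp_le_cancel_iff order_trans power_le_one less_imp_le)
  show "\<bar>gauss_flow_u \<epsilon> x Y - 1\<bar> \<le> 3 * \<bar>\<epsilon>\<bar>"
    using gauss_flow_u_near_one[OF assms(2), of \<epsilon>] mult_left_mono[OF exp_L abs_ge_zero[of \<epsilon>]]
    by linarith
  have "L * exp (L\<^sup>2) \<le> 1 * 3" using L assms(1) exp_L by (intro mult_mono) auto
  have "2 * \<bar>\<epsilon>\<bar> * L * exp (L\<^sup>2) * Y = (2 * \<bar>\<epsilon>\<bar> * Y) * (L * exp (L\<^sup>2))" by (simp only: ac_simps)
  also have "\<dots> \<le> (2 * \<bar>\<epsilon>\<bar> * Y) * (1 * 3)"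
    using Y \<open>L * exp (L\<^sup>2) \<le> 1 * 3\<close> by (intro mult_left_mono) auto
  finally have "\<bar>gauss_flow_v \<epsilon> x Y\<bar> \<le> 6 * \<bar>\<epsilon>\<bar> * Y"
    using gauss_flow_v_le[OF assms(2), of \<epsilon>] by linarith
  then show "\<bar>gauss_flow_v \<epsilon> x Y / Y\<bar> \<le> 6 * \<bar>\<epsilon>\<bar>"
    using Y by (simp add: abs_div pos_divide_le_eq)
qed

lemma gauss_flow_v_nonzero:
  assumes "0 < L" "\<epsilon> \<noteq> 0"
  shows "\<exists>(x, Y)\<in>Omega L. gauss_flow_v \<epsilon> x Y \<noteq> 0"
proof
  have "2 * (L / 2) * (pi / (2 * L)) = pi / 2" using assms(1) by simp
  then show "case (L / 2, pi / (2 * L)) of (x, Y) \<Rightarrow> gauss_flow_v \<epsilon> x Y \<noteq> 0"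
    using assms by (simp add: gauss_flow_v_eq)
  show "(L / 2, pi / (2 * L)) \<in> Omega L" using assms(1) by (simp add: Omega_def)
qed

lemma gauss_flow_u_depends_on_x:
  assumes "0 < L" "\<epsilon> \<noteq> 0"
  shows "\<exists>x1 x2 Y. x1 \<in> {0<..<L} \<and> x2 \<in> {0<..<L} \<and> Y > 0 \<and> gauss_flow_u \<epsilon> x1 Y \<noteq> gauss_flow_u \<epsilon> x2 Y"
proof (rule exI[of _ "L / 2"], rule exI[of _ "L / 4"], rule exI[of _ "pi / (2 * L)"])
  have "2 * (L / 2) * (pi / (2 * L)) = pi / 2" "2 * (L / 4) * (pi / (2 * L)) = pi / 4"
    using assms(1) by simp_all
  then show "L / 2 \<in> {0<..<L} \<and> L / 4 \<in> {0<..<L} \<and> pi / (2 * L) > 0 \<and>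
      gauss_flow_u \<epsilon> (L / 2) (pi / (2 * L)) \<noteq> gauss_flow_u \<epsilon> (L / 4) (pi / (2 * L))"
    using assms by (simp add: gauss_flow_u_eq cos_45)
qed

theorem propositionA1:
  fixes \<eta> :: real and K :: nat
  assumes "\<eta> > 0" and "K \<ge> 1"
  shows "\<exists>L0>0. \<forall>L. 0 < L \<and> L \<le> L0 \<longrightarrow>
    (\<exists>u v P. steady_euler L u v P \<and>
       (\<exists>(x,Y)\<in>Omega L. v x Y \<noteq> 0) \<and>
       (\<exists>x1 x2 Y. x1 \<in> {0<..<L} \<and> x2 \<in> {0<..<L} \<and> Y > 0 \<and> u x1 Y \<noteq> u x2 Y) \<and>
       (\<exists>c0 C0. 0 < c0 \<and> (\<forall>(x,Y)\<in>Omega L. c0 \<le> u x Y \<and> u x Y \<le> C0)) \<and>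
       (\<forall>(x,Y)\<in>Omega L. \<bar>v x Y / Y\<bar> \<le> \<eta>) \<and>
       (\<forall>k m. k \<le> K \<and> m \<le> K \<longrightarrow> weighted_bounded L k m v) \<and>
       (\<forall>k m. k \<le> K \<and> 1 \<le> m \<and> m \<le> K \<longrightarrow> weighted_bounded L k m u))"
proof -
  define \<epsilon> where "\<epsilon> = min (1 / 8) (\<eta> / 8)"
  have \<epsilon>: "0 < \<epsilon>" "\<epsilon> \<le> 1 / 8" "\<epsilon> \<le> \<eta> / 8" using assms(1) by (auto simp: \<epsilon>_def)
  show ?thesis
  proof (rule exI[of _ 1], rule conjI, simp, intro allI impI, rule exI[of _ "gauss_flow_u \<epsilon>"],
      rule exI[of _ "gauss_flow_v \<epsilon>"],
      rule exI[of _ "bernoulli_pressure (gauss_flow_u \<epsilon>) (gauss_flow_v \<epsilon>)"],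
      intro conjI allI impI steady_euler_gauss_flow)
    fix L :: real assume L: "0 < L \<and> L \<le> 1"
    show "\<exists>(x, Y)\<in>Omega L. gauss_flow_v \<epsilon> x Y \<noteq> 0"
      using L \<epsilon> by (intro gauss_flow_v_nonzero) auto
    show "\<exists>x1 x2 Y. x1 \<in> {0<..<L} \<and> x2 \<in> {0<..<L} \<and> Y > 0 \<and> gauss_flow_u \<epsilon> x1 Y \<noteq> gauss_flow_u \<epsilon> x2 Y"
      using L \<epsilon> by (intro gauss_flow_u_depends_on_x) auto
    have u_bounds: "1 / 2 \<le> gauss_flow_u \<epsilon> x Y \<and> gauss_flow_u \<epsilon> x Y \<le> 2" if "(x, Y) \<in> Omega L" for x Y
      using gauss_flow_bounds_unit_width(1)[of L x Y \<epsilon>] that L \<epsilon> abs_of_pos[OF \<epsilon>(1)]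
      unfolding abs_le_iff by linarith
    show "\<exists>c0 C0. 0 < c0 \<and> (\<forall>(x, Y)\<in>Omega L. c0 \<le> gauss_flow_u \<epsilon> x Y \<and> gauss_flow_u \<epsilon> x Y \<le> C0)"
      by (rule exI[of _ "1 / 2"], rule exI[of _ 2])
        (use u_bounds in \<open>simp only: half_gt_zero_iff zero_less_one simp_thms, blast\<close>)
    have "\<bar>gauss_flow_v \<epsilon> x Y / Y\<bar> \<le> \<eta>" if "(x, Y) \<in> Omega L" for x Y
      using gauss_flow_bounds_unit_width(2)[of L x Y \<epsilon>] that L \<epsilon> abs_of_pos[OF \<epsilon>(1)] by linarith
    then show "\<forall>(x, Y)\<in>Omega L. \<bar>gauss_flow_v \<epsilon> x Y / Y\<bar> \<le> \<eta>" by blast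
    show "weighted_bounded L k m (gauss_flow_v \<epsilon>)" for k m
      unfolding gauss_flow_v_def by (rule weighted_bounded_re_gauss)
    show "weighted_bounded L k m (gauss_flow_u \<epsilon>)" if "k \<le> K \<and> 1 \<le> m \<and> m \<le> K" for k m
      unfolding gauss_flow_u_def using that by (intro weighted_bounded_const_plus_re_gauss) simp
  qed
qed

end
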